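(* Let $n\geq 2$, $c\geq 2$, and let $L_{n,c}$ be the free metabelian nilpotent Lie algebra of nilpotency class $c$ generated by $x_1,\ldots,x_n$ over a field $K$ of characteristic zero. Let $u=\sum_{i=1}^n\alpha_ix_i$ with $\alpha_i\in K$ and let $v=\sum_{i=1}^n x_i$. If $[u,v]\in L_{n,c}^{S_n}$, then $u=\alpha v$ for some $\alpha\in K$.
   Context: $L_{n,c}=L_n/(L_n''+\gamma^{c+1}(L_n))$, where $L_n$ is the free Lie algebra on $x_1,\ldots,x_n$, $\gamma^1(L_n)=L_n$, $\gamma^k(L_n)=[\gamma^{k-1}(L_n),L_n]$, and $L_n''=[L_n',L_n']$ with $L_n'=[L_n,L_n]$. The symmetric group $S_n$ acts on $L_{n,c}$ by $\pi\, p(x_1,\ldots,x_n)=p(x_{\pi(1)},\ldots,x_{\pi(n)})$, and $L_{n,c}^{S_n}$ is the algebra of elements fixed by all $\pi\in S_n$ (symmetric polynomials). *)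

theory Defs
  imports Main "HOL-Combinatorics.Permutations"
begin

text \<open>Noncommutative polynomials (the free associative algebra K<x_0,x_1,...>) are
  modelled as coefficient functions on words (lists of variable indices).
  The free Lie algebra L_n is the Lie subalgebra generated by x_0,...,x_(n-1)
  inside it (Witt's theorem).\<close>

type_synonym 'a ncpoly = "nat list \<Rightarrow> 'a"

definition nc_zero :: "'a::field ncpoly" where
  "nc_zero = (\<lambda>w. 0)"

definition nc_add :: "'a::field ncpoly \<Rightarrow> 'a ncpoly \<Rightarrow> 'a ncpoly" where
  "nc_add p q = (\<lambda>w. p w + q w)"

definition nc_diff :: "'a::field ncpoly \<Rightarrow> 'a ncpoly \<Rightarrow> 'a ncpoly" where
  "nc_diff p q = (\<lambda>w. p w - q w)"

definition nc_smult :: "'a::field \<Rightarrow> 'a ncpoly \<Rightarrow> 'a ncpoly" where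
  "nc_smult c p = (\<lambda>w. c * p w)"

definition nc_mult :: "'a::field ncpoly \<Rightarrow> 'a ncpoly \<Rightarrow> 'a ncpoly" where
  "nc_mult p q = (\<lambda>w. \<Sum>k\<le>length w. p (take k w) * q (drop k w))"

definition lie_bracket :: "'a::field ncpoly \<Rightarrow> 'a ncpoly \<Rightarrow> 'a ncpoly" where
  "lie_bracket p q = nc_diff (nc_mult p q) (nc_mult q p)"

text \<open>The generator x_i (indices 0,...,n-1 stand for x_1,...,x_n).\<close>
definition gen :: "nat \<Rightarrow> 'a::field ncpoly" where
  "gen i = (\<lambda>w. if w = [i] then 1 else 0)"

inductive_set lin_span :: "'a::field ncpoly set \<Rightarrow> 'a ncpoly set" for S where
  zero: "nc_zero \<in> lin_span S"
| base: "p \<in> S \<Longrightarrow> p \<in> lin_span S"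
| add: "p \<in> lin_span S \<Longrightarrow> q \<in> lin_span S \<Longrightarrow> nc_add p q \<in> lin_span S"
| smult: "p \<in> lin_span S \<Longrightarrow> nc_smult c p \<in> lin_span S"

inductive_set free_lie :: "nat \<Rightarrow> 'a::field ncpoly set" for n where
  zero: "nc_zero \<in> free_lie n"
| gen: "i < n \<Longrightarrow> gen i \<in> free_lie n"
| add: "p \<in> free_lie n \<Longrightarrow> q \<in> free_lie n \<Longrightarrow> nc_add p q \<in> free_lie n"
| smult: "p \<in> free_lie n \<Longrightarrow> nc_smult c p \<in> free_lie n"
| bracket: "p \<in> free_lie n \<Longrightarrow> q \<in> free_lie n \<Longrightarrow> lie_bracket p q \<in> free_lie n"

definition brackets :: "'a::field ncpoly set \<Rightarrow> 'a ncpoly set \<Rightarrow> 'a ncpoly set" where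
  "brackets A B = {lie_bracket a b | a b. a \<in> A \<and> b \<in> B}"

definition derived1 :: "nat \<Rightarrow> 'a::field ncpoly set" where
  "derived1 n = lin_span (brackets (free_lie n) (free_lie n))"

definition derived2 :: "nat \<Rightarrow> 'a::field ncpoly set" where
  "derived2 n = lin_span (brackets (derived1 n) (derived1 n))"

text \<open>Lower central series, shifted: lcs n k = gamma^(k+1)(L_n).\<close>
primrec lcs :: "nat \<Rightarrow> nat \<Rightarrow> 'a::field ncpoly set" where
  "lcs n 0 = free_lie n"
| "lcs n (Suc k) = lin_span (brackets (lcs n k) (free_lie n))"

text \<open>The ideal L_n'' + gamma^(c+1)(L_n); L_(n,c) = L_n / this ideal.\<close>
definition mnil_ideal :: "nat \<Rightarrow> nat \<Rightarrow> 'a::field ncpoly set" where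
  "mnil_ideal n c = {nc_add p q | p q. p \<in> derived2 n \<and> q \<in> lcs n c}"

definition Lnc_eq :: "nat \<Rightarrow> nat \<Rightarrow> 'a::field ncpoly \<Rightarrow> 'a ncpoly \<Rightarrow> bool" where
  "Lnc_eq n c p q \<longleftrightarrow> nc_diff p q \<in> mnil_ideal n c"

text \<open>Action of a permutation: p(x_1,...,x_n) maps to p(x_pi(1),...,x_pi(n)),
  i.e. each letter i of a word is replaced by pi i.\<close>
definition perm_act :: "(nat \<Rightarrow> nat) \<Rightarrow> 'a::field ncpoly \<Rightarrow> 'a ncpoly" where
  "perm_act \<pi> p = (\<lambda>w. p (map (inv \<pi>) w))"

definition Lnc_symmetric :: "nat \<Rightarrow> nat \<Rightarrow> 'a::field ncpoly \<Rightarrow> bool" where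
  "Lnc_symmetric n c p \<longleftrightarrow> (\<forall>\<pi>. \<pi> permutes {..<n} \<longrightarrow> Lnc_eq n c (perm_act \<pi> p) p)"

end

theory Submission
  imports Defs
begin

text \<open>Every element of the ideal \<open>L\<^sub>n'' + \<gamma>\<^sup>c\<^sup>+\<^sup>1(L\<^sub>n)\<close> is a combination of
  brackets of length at least \<open>min 4 (c + 1)\<close>, so for \<open>c \<ge> 2\<close> the quotient map to \<open>L\<^sub>n\<^sub>,\<^sub>c\<close>
  is injective on the homogeneous components of degree at most 2. The coefficient of
  \<open>x\<^sub>i x\<^sub>j\<close> in \<open>[u, v]\<close> is \<open>\<alpha>\<^sub>i - \<alpha>\<^sub>j\<close>; invariance under the transposition \<open>(i j)\<close> turns it
  into \<open>\<alpha>\<^sub>j - \<alpha>\<^sub>i\<close>, so \<open>\<alpha>\<^sub>i = \<alpha>\<^sub>j\<close> in characteristic zero.\<close>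

definition nc_order_gt :: "nat \<Rightarrow> 'a::field ncpoly \<Rightarrow> bool" where
  "nc_order_gt k p \<longleftrightarrow> (\<forall>w. length w \<le> k \<longrightarrow> p w = 0)"

lemma nc_order_gt_mono: "nc_order_gt k p \<Longrightarrow> j \<le> k \<Longrightarrow> nc_order_gt j p"
  unfolding nc_order_gt_def by simp

lemma nc_order_gt_lin_span:
  "p \<in> lin_span S \<Longrightarrow> (\<And>q. q \<in> S \<Longrightarrow> nc_order_gt k q) \<Longrightarrow> nc_order_gt k p"
  by (induction rule: lin_span.induct)
     (auto simp: nc_order_gt_def nc_zero_def nc_add_def nc_smult_def)

lemma nc_order_gt_mult:
  assumes "nc_order_gt a p" "nc_order_gt b q"
  shows "nc_order_gt (a + b + 1) (nc_mult p q)"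
  unfolding nc_order_gt_def nc_mult_def
proof (intro allI impI sum.neutral ballI)
  fix w :: "nat list" and k
  assume "length w \<le> a + b + 1"
  then have "k \<le> a \<or> length (drop k w) \<le> b" by auto
  then show "p (take k w) * q (drop k w) = 0"
    using assms by (auto simp: nc_order_gt_def)
qed

lemma nc_order_gt_lie_bracket:
  assumes "nc_order_gt a p" "nc_order_gt b q"
  shows "nc_order_gt (a + b + 1) (lie_bracket p q)"
  using nc_order_gt_mult[OF assms] nc_order_gt_mult[OF assms(2,1)]
  by (simp add: nc_order_gt_def lie_bracket_def nc_diff_def add.commute)

lemma nc_order_gt_lin_span_brackets:
  assumes "\<And>x. x \<in> A \<Longrightarrow> nc_order_gt a x" "\<And>y. y \<in> B \<Longrightarrow> nc_order_gt b y"
    and "p \<in> lin_span (brackets A B)"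
  shows "nc_order_gt (a + b + 1) p"
  using assms(3)
proof (rule nc_order_gt_lin_span)
  fix q
  assume "q \<in> brackets A B"
  then obtain x y where "q = lie_bracket x y" "x \<in> A" "y \<in> B"
    unfolding brackets_def by blast
  then show "nc_order_gt (a + b + 1) q"
    using assms(1,2) nc_order_gt_lie_bracket by blast
qed

lemma free_lie_order_gt: "p \<in> free_lie n \<Longrightarrow> nc_order_gt 0 p"
proof (induction rule: free_lie.induct)
  case (bracket p q)
  have "nc_order_gt (0 + 0 + 1) (lie_bracket p q)"
    by (rule nc_order_gt_lie_bracket[OF bracket.IH])
  then show ?case
    by (rule nc_order_gt_mono) simp
qed (auto simp: nc_order_gt_def nc_zero_def gen_def nc_add_def nc_smult_def)

lemma lcs_order_gt: "p \<in> lcs n k \<Longrightarrow> nc_order_gt k p"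
proof (induction k arbitrary: p)
  case 0
  then show ?case by (simp add: free_lie_order_gt)
next
  case (Suc k)
  then have "nc_order_gt (k + 0 + 1) p"
    by (intro nc_order_gt_lin_span_brackets[of "lcs n k" _ "free_lie n"])
       (auto intro: free_lie_order_gt)
  then show ?case by simp
qed

lemma derived1_order_gt: "p \<in> derived1 n \<Longrightarrow> nc_order_gt 1 p"
  using nc_order_gt_lin_span_brackets[of "free_lie n" 0 "free_lie n" 0 p]
  by (simp add: derived1_def free_lie_order_gt)

lemma derived2_order_gt: "p \<in> derived2 n \<Longrightarrow> nc_order_gt 3 p"
  unfolding derived2_def
  by (drule nc_order_gt_lin_span_brackets[rotated 2]) (auto intro: derived1_order_gt simp: numeral_3_eq_3)

lemma mnil_ideal_order_gt: "p \<in> mnil_ideal n c \<Longrightarrow> nc_order_gt (min 3 c) p"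
  by (auto simp: mnil_ideal_def nc_order_gt_def nc_add_def
           dest!: derived2_order_gt lcs_order_gt)

lemma nc_zero_in_mnil_ideal: "nc_zero \<in> mnil_ideal n c"
proof -
  have "nc_zero \<in> lcs n c"
    by (cases c) (auto intro: free_lie.zero lin_span.zero)
  moreover have "nc_zero \<in> derived2 n"
    unfolding derived2_def by (rule lin_span.zero)
  moreover have "nc_zero = nc_add nc_zero nc_zero"
    by (simp add: nc_add_def nc_zero_def)
  ultimately show ?thesis
    unfolding mnil_ideal_def by blast
qed

lemma Lnc_eq_refl: "Lnc_eq n c p p"
proof -
  have "nc_diff p p = nc_zero"
    by (simp add: nc_diff_def nc_zero_def)
  then show ?thesis
    by (simp add: Lnc_eq_def nc_zero_in_mnil_ideal)
qed

lemma Lnc_eq_coeff: "Lnc_eq n c p q \<Longrightarrow> length w \<le> min 3 c \<Longrightarrow> p w = q w"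
  by (auto simp: Lnc_eq_def nc_order_gt_def nc_diff_def dest!: mnil_ideal_order_gt)

lemma perm_act_transpose_Cons2: "perm_act (transpose i j) p [i, j] = p [j, i]"
  by (simp add: perm_act_def inv_swap_id)

lemma Lnc_symmetric_swap:
  assumes "Lnc_symmetric n c p" "2 \<le> c" "i < n" "j < n"
  shows "p [j, i] = p [i, j]"
proof -
  have "transpose i j permutes {..<n}"
    using assms(3,4) by (intro permutes_swap_id) auto
  then have "Lnc_eq n c (perm_act (transpose i j) p) p"
    using assms(1) by (simp add: Lnc_symmetric_def)
  then have "perm_act (transpose i j) p [i, j] = p [i, j]"
    by (rule Lnc_eq_coeff) (use assms(2) in simp)
  then show ?thesis
    by (simp add: perm_act_transpose_Cons2)
qed

definition lin_comb :: "nat \<Rightarrow> (nat \<Rightarrow> 'a::field) \<Rightarrow> 'a ncpoly" where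
  "lin_comb n a = (\<lambda>w. \<Sum>i<n. a i * gen i w)"

lemma lin_comb_Nil: "lin_comb n a [] = 0"
  by (simp add: lin_comb_def gen_def)

lemma lin_comb_singleton: "i < n \<Longrightarrow> lin_comb n a [i] = a i"
  by (simp add: lin_comb_def gen_def if_distrib[of "\<lambda>x. _ * x"] cong: if_cong)

lemma lin_comb_Cons2: "lin_comb n a [i, j] = 0"
  by (simp add: lin_comb_def gen_def)

lemma nc_mult_Cons2:
  "nc_mult p q [i, j] = p [] * q [i, j] + p [i] * q [j] + p [i, j] * q []"
  by (simp add: nc_mult_def numeral_2_eq_2 atMost_Suc)

lemma lie_bracket_lin_comb_Cons2:
  "i < n \<Longrightarrow> j < n \<Longrightarrow>
     lie_bracket (lin_comb n a) (lin_comb n b) [i, j] = a i * b j - b i * a j"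
  by (simp add: lie_bracket_def nc_diff_def nc_mult_Cons2
      lin_comb_Nil lin_comb_singleton lin_comb_Cons2)

theorem lemma2p2:
  fixes \<alpha> :: "nat \<Rightarrow> 'a::field_char_0" and n c :: nat
  assumes "n \<ge> 2" and "c \<ge> 2"
    and "Lnc_symmetric n c
           (lie_bracket (\<lambda>w. \<Sum>i<n. \<alpha> i * gen i w) (\<lambda>w. \<Sum>i<n. gen i w))"
  shows "\<exists>a::'a. Lnc_eq n c (\<lambda>w. \<Sum>i<n. \<alpha> i * gen i w)
                          (nc_smult a (\<lambda>w. \<Sum>i<n. gen i w))"
proof -
  have u: "(\<lambda>w. \<Sum>i<n. \<alpha> i * gen i w) = lin_comb n \<alpha>"
    and v: "(\<lambda>w. \<Sum>i<n. gen i w) = lin_comb n (\<lambda>_. 1)"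
    by (simp_all add: lin_comb_def)
  have const: "\<alpha> i = \<alpha> 0" if "i < n" for i
  proof -
    have n0: "0 < n" using that by simp
    have "\<alpha> 0 - \<alpha> i = \<alpha> i - \<alpha> 0"
      using Lnc_symmetric_swap[OF assms(3)[unfolded u v] assms(2) that n0]
        lie_bracket_lin_comb_Cons2[OF that n0, of \<alpha> "\<lambda>_. 1"]
        lie_bracket_lin_comb_Cons2[OF n0 that, of \<alpha> "\<lambda>_. 1"]
      by simp
    then show ?thesis by simp
  qed
  have "lin_comb n \<alpha> w = nc_smult (\<alpha> 0) (lin_comb n (\<lambda>_. 1)) w" for w
    unfolding lin_comb_def nc_smult_def sum_distrib_left
    by (rule sum.cong) (auto dest: const)
  then have "lin_comb n \<alpha> = nc_smult (\<alpha> 0) (lin_comb n (\<lambda>_. 1))" ..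
  then have "Lnc_eq n c (lin_comb n \<alpha>) (nc_smult (\<alpha> 0) (lin_comb n (\<lambda>_. 1)))"
    by (simp only: Lnc_eq_refl)
  then show ?thesis
    unfolding u v ..
qed

end
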